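(* Let $X=\mathbb{CP}^2\#n\overline{\mathbb{CP}}^2$, $k\ge1$, and let $[\omega]\in\mathcal{P}^{c_1>0}$ be a $c_1$-nef symplectic class on $X$. For small $\varepsilon>0$ let $\omega_\varepsilon$ be the symplectic form on $X\#\overline{\mathbb{CP}}^2$ obtained by a blowup of size $\varepsilon$, i.e. with class $[\omega]-\varepsilon PD(E_{n+1})$. Then $\lim_{\varepsilon\to0}f_k(X\#\overline{\mathbb{CP}}^2,\omega_\varepsilon)=f_k(X,\omega)$.
   Context: $K_0=-3H+E_1+\cdots+E_n$ (and $-3H+E_1+\cdots+E_{n+1}$ on the blowup), $\mathrm{ind}(A):=A^2-K_0\cdot A$. For a rational manifold $Y=\mathbb{CP}^2\#m\overline{\mathbb{CP}}^2$ with symplectic form $\omega$ of standard canonical class, $f_k(Y,\omega)=\inf\{\omega(A):A\in H_2(Y;\mathbb{Z})\ J\text{-nef},\ \mathrm{ind}(A)\ge2k\}$ for any $\omega$-tame $J$ ($A$ is $J$-nef if it pairs nonnegatively with all classes of $J$-holomorphic subvarieties); it depends only on $[\omega]$ and equals $\inf\{\omega(A):\mathrm{ind}(A)\ge2k,\ A\cdot H>0\}$. With $H^2\cong\mathbb{R}^{n+1}$ via $(x_0,\dots,x_n)\leftrightarrow x_0PD(H)-\sum x_iPD(E_i)$, the reduced cone $\mathcal{P}$ is: $0<x_1<x_0$ ($n=1$); $0<x_2\le x_1$, $x_1+x_2<x_0$ ($n=2$); $0<x_n\le\cdots\le x_1$, $x_1+x_2+x_3\le x_0$, $\sum x_i^2<x_0^2$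 ($n\ge3$); $\mathcal{P}^{c_1>0}=\{[\omega]\in\mathcal{P}:\omega(3H-\sum E_i)>0\}$. *)

theory Defs
  imports "HOL-Analysis.Analysis"
begin

text \<open>Homology classes of CP^2 # n (-CP^2): A = a H - sum_{i=1..n} b_i E_i, encoded by
  (a, b) with a :: int and b :: nat => int (only b 1, ..., b n matter).
  Cohomology classes: x :: nat => real with x 0 = x_0 and x i = x_i (i = 1..n),
  corresponding to x_0 PD(H) - sum x_i PD(E_i).\<close>

definition selfint :: "nat \<Rightarrow> int \<Rightarrow> (nat \<Rightarrow> int) \<Rightarrow> int" where
  "selfint n a b = a^2 - (\<Sum>i=1..n. (b i)^2)"

definition K0_dot :: "nat \<Rightarrow> int \<Rightarrow> (nat \<Rightarrow> int) \<Rightarrow> int" where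
  "K0_dot n a b = -3 * a + (\<Sum>i=1..n. b i)"

definition ind :: "nat \<Rightarrow> int \<Rightarrow> (nat \<Rightarrow> int) \<Rightarrow> int" where
  "ind n a b = selfint n a b - K0_dot n a b"

definition pairing :: "nat \<Rightarrow> (nat \<Rightarrow> real) \<Rightarrow> int \<Rightarrow> (nat \<Rightarrow> int) \<Rightarrow> real" where
  "pairing n x a b = of_int a * x 0 - (\<Sum>i=1..n. x i * of_int (b i))"

definition fk :: "nat \<Rightarrow> (nat \<Rightarrow> real) \<Rightarrow> nat \<Rightarrow> real" where
  "fk n x k = Inf {pairing n x a b | a b. a > 0 \<and> ind n a b \<ge> 2 * int k}"

definition reduced_cone :: "nat \<Rightarrow> (nat \<Rightarrow> real) \<Rightarrow> bool" where
  "reduced_cone n x \<longleftrightarrow>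
     (if n = 1 then 0 < x 1 \<and> x 1 < x 0
      else if n = 2 then 0 < x 2 \<and> x 2 \<le> x 1 \<and> x 1 + x 2 < x 0
      else 0 < x n \<and> (\<forall>i\<in>{1..<n}. x (Suc i) \<le> x i) \<and> x 1 + x 2 + x 3 \<le> x 0
           \<and> (\<Sum>i=1..n. (x i)^2) < (x 0)^2)"

definition c1_pos :: "nat \<Rightarrow> (nat \<Rightarrow> real) \<Rightarrow> bool" where
  "c1_pos n x \<longleftrightarrow> 3 * x 0 - (\<Sum>i=1..n. x i) > 0"

definition P_c1pos :: "nat \<Rightarrow> (nat \<Rightarrow> real) \<Rightarrow> bool" where
  "P_c1pos n x \<longleftrightarrow> reduced_cone n x \<and> c1_pos n x"

end

theory Submission
  imports Defs
begin

text \<open>Positivity of the volume, \<open>\<Sum> x\<^sub>i\<^sup>2 < x\<^sub>0\<^sup>2\<close>, makes the area of a class with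
  \<open>ind \<ge> 0\<close> grow at least linearly in its degree \<open>a\<close>. Hence \<open>f\<^sub>k\<close> is a finite infimum, and
  a class on the blowup with exceptional coefficient \<open>m = b\<^sub>n\<^sub>+\<^sub>1\<close> loses only the area
  \<open>\<epsilon> m\<close>: for bounded \<open>m\<close> this is \<open>O(\<epsilon>)\<close>, while \<open>m\<close> is at most \<open>a + 1\<close>, so classes
  with large \<open>m\<close> have large degree and area far above \<open>f\<^sub>k\<close>. Forgetting \<open>E\<^sub>n\<^sub>+\<^sub>1\<close> gives the
  reverse inequality \<open>f\<^sub>k(blowup) \<le> f\<^sub>k(X)\<close>.\<close>

definition fk_values :: "nat \<Rightarrow> (nat \<Rightarrow> real) \<Rightarrow> nat \<Rightarrow> real set" where
  "fk_values n x k = {pairing n x a b | a b. a > 0 \<and> ind n a b \<ge> 2 * int k}"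

lemma fk_eq_Inf_fk_values: "fk n x k = Inf (fk_values n x k)"
  by (simp add: fk_def fk_values_def)

lemma fk_values_nonempty: "fk_values n x k \<noteq> {}"
proof -
  have "ind n (int k + 1) (\<lambda>_. 0) \<ge> 2 * int k"
    by (simp add: ind_def selfint_def K0_dot_def power2_eq_square algebra_simps)
  then show ?thesis
    unfolding fk_values_def by force
qed

lemma int_square_add_self_nonneg: "0 \<le> (c::int)^2 + c"
proof -
  have "c^2 + c = c * (c + 1)"
    by (simp add: power2_eq_square algebra_simps)
  also have "\<dots> \<ge> 0"
    by (cases "c \<ge> 0") (auto simp: zero_le_mult_iff)
  finally show ?thesis .
qed

lemma ind_le_square: "ind n a b \<le> a^2 + 3 * a"
proof -
  have "0 \<le> (\<Sum>i=1..n. (b i)^2 + b i)"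
    by (intro sum_nonneg) (simp add: int_square_add_self_nonneg)
  then show ?thesis
    by (simp add: ind_def selfint_def K0_dot_def sum.distrib)
qed

lemma ind_Suc: "ind (Suc n) a b = ind n a b - (b (Suc n))^2 - b (Suc n)"
  by (simp add: ind_def selfint_def K0_dot_def)

lemma pairing_Suc_fun_upd:
  "pairing (Suc n) (x(Suc n := e)) a b = pairing n x a b - e * b (Suc n)"
proof -
  have "(\<Sum>i=1..n. (x(Suc n := e)) i * of_int (b i)) = (\<Sum>i=1..n. x i * of_int (b i))"
    by (rule sum.cong) auto
  then show ?thesis
    by (simp add: pairing_def)
qed

lemma fk_values_subset_blowup: "fk_values n x k \<subseteq> fk_values (Suc n) (x(Suc n := e)) k"
proof
  fix p assume "p \<in> fk_values n x k"
  then obtain a b where p: "p = pairing n x a b" "a > 0" "ind n a b \<ge> 2 * int k"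
    by (auto simp: fk_values_def)
  define b' where "b' = b(Suc n := 0)"
  have "ind n a b' = ind n a b" "pairing n x a b' = pairing n x a b"
    unfolding b'_def ind_def selfint_def K0_dot_def pairing_def
    by (auto intro!: sum.cong)
  then have "p = pairing (Suc n) (x(Suc n := e)) a b'" "ind (Suc n) a b' \<ge> 2 * int k"
    using p by (auto simp: pairing_Suc_fun_upd ind_Suc b'_def)
  then show "p \<in> fk_values (Suc n) (x(Suc n := e)) k"
    using p(2) unfolding fk_values_def by blast
qed

lemma mult_le_by_square_completion:
  fixes l b y :: real
  assumes "l > 0"
  shows "b * y \<le> l * (b^2 + b) + y^2 / (4 * l) - y / 2 + l / 4"
proof -
  have "0 \<le> (2 * l * b + l - y)^2" by simp
  then have "4 * l * (b * y) \<le> 4 * l * (l * (b^2 + b) + y^2 / (4 * l) - y / 2 + l / 4)"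
    using assms by (simp add: algebra_simps power2_eq_square)
  then show ?thesis
    using assms by simp
qed

lemma sum_mult_le_by_square_completion:
  fixes l :: real and b :: "nat \<Rightarrow> int"
  assumes "l > 0"
  shows "(\<Sum>i=1..n. x i * of_int (b i))
    \<le> l * (\<Sum>i=1..n. (of_int (b i))^2 + of_int (b i)) + (\<Sum>i=1..n. (x i)^2) / (4 * l)
       + (\<Sum>i=1..n. \<bar>x i\<bar>) / 2 + n * l / 4"
proof -
  have "(\<Sum>i=1..n. x i * of_int (b i))
      \<le> (\<Sum>i=1..n. l * ((of_int (b i))^2 + of_int (b i)) + (x i)^2 / (4 * l) + \<bar>x i\<bar> / 2 + l / 4)"
  proof (rule sum_mono)
    fix i
    have "- x i / 2 \<le> \<bar>x i\<bar> / 2" by simp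
    then show "x i * of_int (b i) \<le> l * ((of_int (b i))^2 + of_int (b i)) + (x i)^2 / (4 * l) + \<bar>x i\<bar> / 2 + l / 4"
      using mult_le_by_square_completion[OF assms, of "of_int (b i)" "x i"]
      by (simp add: mult.commute)
  qed
  also have "\<dots> = (\<Sum>i=1..n. l * ((of_int (b i))^2 + of_int (b i))) + (\<Sum>i=1..n. (x i)^2 / (4 * l))
       + (\<Sum>i=1..n. \<bar>x i\<bar> / 2) + n * l / 4"
    by (simp add: sum.distrib)
  also have "\<dots> = l * (\<Sum>i=1..n. (of_int (b i))^2 + of_int (b i)) + (\<Sum>i=1..n. (x i)^2) / (4 * l)
       + (\<Sum>i=1..n. \<bar>x i\<bar>) / 2 + n * l / 4"
    by (simp only: sum_distrib_left sum_divide_distrib)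
  finally show ?thesis .
qed

lemma pairing_ge_linear:
  assumes x0: "0 < x 0" and a: "0 < a" and ind: "0 \<le> ind n a b"
  shows "pairing n x a b \<ge> ((x 0)^2 - (\<Sum>i=1..n. (x i)^2)) / (2 * x 0) * a
           - (3 * x 0 / 2 + n * x 0 / 8 + (\<Sum>i=1..n. \<bar>x i\<bar>) / 2)"
proof -
  define r where "r = real_of_int a"
  define l where "l = x 0 / (2 * r)"
  define s where "s = (\<Sum>i=1..n. (x i)^2)"
  have r: "r \<ge> 1" using a by (simp add: r_def)
  have l: "l > 0" using x0 r by (simp add: l_def)
  have "real_of_int (ind n a b) \<ge> 0"
    using ind by simp
  then have "(\<Sum>i=1..n. (of_int (b i))^2 + of_int (b i)) \<le> r^2 + 3 * r"
    by (simp add: r_def ind_def selfint_def K0_dot_def sum.distrib)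
  then have "l * (\<Sum>i=1..n. (of_int (b i))^2 + of_int (b i)) \<le> l * (r^2 + 3 * r)"
    using l by (intro mult_left_mono) auto
  then have "(\<Sum>i=1..n. x i * of_int (b i))
      \<le> l * (r^2 + 3 * r) + s / (4 * l) + (\<Sum>i=1..n. \<bar>x i\<bar>) / 2 + n * l / 4"
    using sum_mult_le_by_square_completion[OF l, where n=n and x=x and b=b] unfolding s_def by linarith
  also have "\<dots> = x 0 * r / 2 + 3 * x 0 / 2 + s * r / (2 * x 0) + (\<Sum>i=1..n. \<bar>x i\<bar>) / 2
      + n * x 0 / (8 * r)"
    using r x0 by (simp add: l_def field_simps power2_eq_square)
  also have "n * x 0 / (8 * r) \<le> n * x 0 / 8"
    using r x0 by (intro divide_left_mono) auto
  finally have "(\<Sum>i=1..n. x i * of_int (b i))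
      \<le> x 0 * r / 2 + 3 * x 0 / 2 + s * r / (2 * x 0) + (\<Sum>i=1..n. \<bar>x i\<bar>) / 2 + n * x 0 / 8"
    by simp
  moreover have "((x 0)^2 - s) / (2 * x 0) * r = r * x 0 - (x 0 * r / 2 + s * r / (2 * x 0))"
    using x0 by (simp add: field_simps power2_eq_square)
  moreover have "pairing n x a b = r * x 0 - (\<Sum>i=1..n. x i * of_int (b i))"
    by (simp add: pairing_def r_def mult.commute)
  ultimately show ?thesis
    unfolding s_def r_def by linarith
qed

lemma fk_values_bdd_below:
  assumes "0 < x 0" and "(\<Sum>i=1..n. (x i)^2) < (x 0)^2"
  shows "bdd_below (fk_values n x k)"
proof (rule bdd_belowI)
  fix p assume "p \<in> fk_values n x k"
  then obtain a b where p: "p = pairing n x a b" "0 < a" "2 * int k \<le> ind n a b"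
    by (auto simp: fk_values_def)
  have "0 \<le> ((x 0)^2 - (\<Sum>i=1..n. (x i)^2)) / (2 * x 0) * a"
    using assms p(2) by simp
  then show "- (3 * x 0 / 2 + n * x 0 / 8 + (\<Sum>i=1..n. \<bar>x i\<bar>) / 2) \<le> p"
    using pairing_ge_linear[of x a n b] assms(1) p(2) p by linarith
qed

lemma fk_le_pairing:
  assumes "0 < x 0" and "(\<Sum>i=1..n. (x i)^2) < (x 0)^2"
    and "0 < a" and "2 * int k \<le> ind n a b"
  shows "fk n x k \<le> pairing n x a b"
  unfolding fk_eq_Inf_fk_values
  using fk_values_bdd_below[OF assms(1,2)] assms(3,4)
  by (intro cInf_lower) (auto simp: fk_values_def)

lemma exceptional_coefficient_le_degree:
  assumes "0 \<le> ind (Suc n) a b" and "0 \<le> a"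
  shows "b (Suc n) \<le> a + 1"
proof (rule ccontr)
  assume "\<not> b (Suc n) \<le> a + 1"
  then have "(a + 2) * (a + 2) \<le> b (Suc n) * b (Suc n)" and "a + 2 \<le> b (Suc n)"
    using assms(2) by (auto intro: mult_mono)
  moreover have "(b (Suc n))^2 + b (Suc n) \<le> a^2 + 3 * a"
    using assms(1) ind_le_square[of n a b] by (simp add: ind_Suc)
  ultimately show False
    using assms(2) by (simp add: power2_eq_square algebra_simps)
qed

text \<open>The loss \<open>\<epsilon> b\<^sub>n\<^sub>+\<^sub>1\<close> is at most \<open>\<epsilon> M\<close> unless \<open>b\<^sub>n\<^sub>+\<^sub>1 > M\<close>; for such classes the degree
  \<open>a \<ge> b\<^sub>n\<^sub>+\<^sub>1 - 1\<close> is so large that the area exceeds \<open>\<bar>f\<^sub>k\<bar>\<close> as long as \<open>\<epsilon>\<close> is at most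
  half the slope \<open>\<delta>\<close> in \<open>pairing_ge_linear\<close>.\<close>
lemma fk_values_blowup_ge:
  assumes x0: "0 < x 0" and vol: "(\<Sum>i=1..n. (x i)^2) < (x 0)^2"
  obtains M \<epsilon>\<^sub>0 :: real where "0 < \<epsilon>\<^sub>0"
    "\<And>\<epsilon> p. 0 < \<epsilon> \<Longrightarrow> \<epsilon> \<le> \<epsilon>\<^sub>0 \<Longrightarrow> p \<in> fk_values (Suc n) (x(Suc n := \<epsilon>)) k
      \<Longrightarrow> fk n x k - \<epsilon> * M \<le> p"
proof -
  define \<delta> where "\<delta> = ((x 0)^2 - (\<Sum>i=1..n. (x i)^2)) / (2 * x 0)"
  define C where "C = 3 * x 0 / 2 + n * x 0 / 8 + (\<Sum>i=1..n. \<bar>x i\<bar>) / 2"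
  define F where "F = fk n x k"
  define M where "M = 2 * (\<bar>F\<bar> + \<delta> + C) / \<delta>"
  have \<delta>: "0 < \<delta>" using x0 vol by (simp add: \<delta>_def)
  have C: "0 \<le> C" using x0 by (simp add: C_def sum_nonneg)
  have M: "0 \<le> M" and \<delta>M: "\<delta> * M = 2 * (\<bar>F\<bar> + \<delta> + C)"
    using \<delta> C by (simp_all add: M_def)
  show thesis
  proof (rule that[of "\<delta> / 2" M])
    fix \<epsilon> p assume \<epsilon>: "0 < \<epsilon>" "\<epsilon> \<le> \<delta> / 2"
      and "p \<in> fk_values (Suc n) (x(Suc n := \<epsilon>)) k"
    then obtain a b where p: "p = pairing (Suc n) (x(Suc n := \<epsilon>)) a b" and a: "0 < a"
      and ind: "2 * int k \<le> ind (Suc n) a b"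
      by (auto simp: fk_values_def)
    define m where "m = b (Suc n)"
    have p_eq: "p = pairing n x a b - \<epsilon> * m"
      using p by (simp add: pairing_Suc_fun_upd m_def)
    have "2 * int k \<le> ind n a b"
      using ind int_square_add_self_nonneg[of m] by (simp add: ind_Suc m_def)
    then have F_le: "F \<le> pairing n x a b"
      unfolding F_def using fk_le_pairing[OF x0 vol a] by blast
    show "fk n x k - \<epsilon> * M \<le> p"
    proof (cases "m \<le> M")
      case True
      then have "\<epsilon> * m \<le> \<epsilon> * M" using \<epsilon> by (intro mult_left_mono) auto
      then show ?thesis using p_eq F_le by (simp add: F_def)
    next
      case False
      have "m \<le> a + 1"
        using exceptional_coefficient_le_degree[of n a b] ind a by (simp add: m_def)
      then have "\<delta> * (m - 1) \<le> \<delta> * a" using \<delta> by (intro mult_left_mono) auto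
      moreover have "\<delta> * a - C \<le> pairing n x a b"
        using pairing_ge_linear[of x a n b] x0 a \<open>2 * int k \<le> ind n a b\<close> by (simp add: \<delta>_def C_def)
      moreover have "\<epsilon> * m \<le> \<delta> / 2 * m" using \<epsilon> False M by (intro mult_right_mono) auto
      moreover have "\<delta> * M \<le> \<delta> * m" using False \<delta> by simp
      moreover have "0 \<le> \<epsilon> * M" using \<epsilon> M by simp
      ultimately show ?thesis
        using p_eq \<delta>M abs_ge_self[of F] by (simp add: F_def algebra_simps)
    qed
  qed (use \<delta> in simp)
qed

lemma fk_blowup_bounds:
  assumes "0 < x 0" and "(\<Sum>i=1..n. (x i)^2) < (x 0)^2"
  obtains M \<epsilon>\<^sub>0 :: real where "0 < \<epsilon>\<^sub>0"
    "\<And>\<epsilon>. 0 < \<epsilon> \<Longrightarrow> \<epsilon> \<le> \<epsilon>\<^sub>0 \<Longrightarrow>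
      fk n x k - \<epsilon> * M \<le> fk (Suc n) (x(Suc n := \<epsilon>)) k \<and> fk (Suc n) (x(Suc n := \<epsilon>)) k \<le> fk n x k"
proof -
  obtain M \<epsilon>\<^sub>0 where "0 < \<epsilon>\<^sub>0" and low: "\<And>\<epsilon> p. 0 < \<epsilon> \<Longrightarrow> \<epsilon> \<le> \<epsilon>\<^sub>0
      \<Longrightarrow> p \<in> fk_values (Suc n) (x(Suc n := \<epsilon>)) k \<Longrightarrow> fk n x k - \<epsilon> * M \<le> p"
    using fk_values_blowup_ge[OF assms] by blast
  show thesis
  proof (rule that[OF \<open>0 < \<epsilon>\<^sub>0\<close>], intro conjI)
    fix \<epsilon> :: real assume \<epsilon>: "0 < \<epsilon>" "\<epsilon> \<le> \<epsilon>\<^sub>0"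
    show "fk n x k - \<epsilon> * M \<le> fk (Suc n) (x(Suc n := \<epsilon>)) k"
      unfolding fk_eq_Inf_fk_values[of "Suc n"]
      using fk_values_nonempty low[OF \<epsilon>] by (rule cInf_greatest)
    have "bdd_below (fk_values (Suc n) (x(Suc n := \<epsilon>)) k)"
      using low[OF \<epsilon>] by (rule bdd_belowI)
    then show "fk (Suc n) (x(Suc n := \<epsilon>)) k \<le> fk n x k"
      unfolding fk_eq_Inf_fk_values
      by (rule cInf_superset_mono[OF fk_values_nonempty _ fk_values_subset_blowup])
  qed
qed

lemma decreasing_last_le:
  fixes x :: "nat \<Rightarrow> real"
  assumes "\<forall>i\<in>{1..<n}. x (Suc i) \<le> x i" and "1 \<le> i" and "i \<le> n"
  shows "x n \<le> x i"
  using assms(3,2)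
proof (induction rule: inc_induct)
  case (step j)
  then show ?case using assms(1) by force
qed simp

lemma reduced_cone_positive_volume:
  assumes "1 \<le> n" and "reduced_cone n x"
  shows "0 < x 0" and "(\<Sum>i=1..n. (x i)^2) < (x 0)^2"
proof -
  consider "n = 1" | "n = 2" | "3 \<le> n" using assms(1) by linarith
  then have "0 < x 0 \<and> (\<Sum>i=1..n. (x i)^2) < (x 0)^2"
  proof cases
    case 1
    then have "0 < x 1" "x 1 < x 0" using assms(2) by (auto simp: reduced_cone_def)
    then show ?thesis using 1 by (simp add: power_strict_mono)
  next
    case 2
    then have h: "0 < x 2" "x 2 \<le> x 1" "x 1 + x 2 < x 0"
      using assms(2) by (auto simp: reduced_cone_def)
    have "(x 1)^2 + (x 2)^2 < (x 1 + x 2)^2"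
      using h by (simp add: power2_eq_square algebra_simps)
    also have "\<dots> < (x 0)^2"
      using h by (intro power_strict_mono) auto
    finally show ?thesis
      using 2 h by (simp add: numeral_2_eq_2)
  next
    case 3
    then have h: "0 < x n" "\<forall>i\<in>{1..<n}. x (Suc i) \<le> x i" "x 1 + x 2 + x 3 \<le> x 0"
      "(\<Sum>i=1..n. (x i)^2) < (x 0)^2"
      using assms(2) by (auto simp: reduced_cone_def)
    have "x n \<le> x 1" "x n \<le> x 2" "x n \<le> x 3"
      using decreasing_last_le[OF h(2)] 3 by auto
    then show ?thesis using h by linarith
  qed
  then show "0 < x 0" and "(\<Sum>i=1..n. (x i)^2) < (x 0)^2" by auto
qed

theorem corollary4p7:
  fixes n k :: nat and x :: "nat \<Rightarrow> real"
  assumes "n \<ge> 1" and "k \<ge> 1" and "P_c1pos n x"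
  shows "((\<lambda>\<epsilon>. fk (Suc n) (x(Suc n := \<epsilon>)) k) \<longlongrightarrow> fk n x k) (at_right 0)"
proof -
  have "reduced_cone n x" using assms(3) by (simp add: P_c1pos_def)
  note volume = reduced_cone_positive_volume[OF assms(1) this]
  obtain M \<epsilon>\<^sub>0 where "0 < \<epsilon>\<^sub>0" and bounds: "\<And>\<epsilon>. 0 < \<epsilon> \<Longrightarrow> \<epsilon> \<le> \<epsilon>\<^sub>0 \<Longrightarrow>
      fk n x k - \<epsilon> * M \<le> fk (Suc n) (x(Suc n := \<epsilon>)) k \<and> fk (Suc n) (x(Suc n := \<epsilon>)) k \<le> fk n x k"
    using fk_blowup_bounds[OF volume, where k=k] by blast
  have small: "\<forall>\<^sub>F \<epsilon> in at_right 0. 0 < \<epsilon> \<and> \<epsilon> \<le> \<epsilon>\<^sub>0"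
    using \<open>0 < \<epsilon>\<^sub>0\<close> by (auto simp: eventually_at_right_field)
  have lower: "\<forall>\<^sub>F \<epsilon> in at_right 0. fk n x k - \<epsilon> * M \<le> fk (Suc n) (x(Suc n := \<epsilon>)) k"
    using small by (rule eventually_mono) (use bounds in blast)
  have upper: "\<forall>\<^sub>F \<epsilon> in at_right 0. fk (Suc n) (x(Suc n := \<epsilon>)) k \<le> fk n x k"
    using small by (rule eventually_mono) (use bounds in blast)
  have "((\<lambda>\<epsilon>. fk n x k - \<epsilon> * M) \<longlongrightarrow> fk n x k - 0 * M) (at_right 0)"
    by (intro tendsto_intros)
  then have "((\<lambda>\<epsilon>. fk n x k - \<epsilon> * M) \<longlongrightarrow> fk n x k) (at_right 0)"
    by simp
  then show ?thesis
    by (rule tendsto_sandwich[OF lower upper _ tendsto_const])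
qed

end
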